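(* $rx_3(K_{2,3})=rx_3(K_{2,4})=3$, and $rx_3(K_{2,t})\geq 4$ for every $t\geq 5$.
   Context: An edge coloring of a graph $G$ is any assignment of colors to the edges (adjacent edges may receive the same color). A tree $T$ in an edge-colored graph is a rainbow tree if no two edges of $T$ have the same color. For $S\subseteq V(G)$, an $S$-tree is a subtree of $G$ containing all vertices of $S$. A $3$-rainbow coloring of $G$ is an edge coloring such that for every set $S$ of $3$ vertices of $G$ there is a rainbow $S$-tree in $G$. The $3$-rainbow index $rx_3(G)$ is the minimum number of colors in a $3$-rainbow coloring of $G$. $K_{2,t}$ denotes the complete bipartite graph with parts of sizes $2$ and $t$. *)

theory Defs
  imports Main
begin

(* Graphs are given by a vertex set V and an edge set E of 2-element vertex sets. *)

definition reach :: "'a set set \<Rightarrow> 'a \<Rightarrow> 'a \<Rightarrow> bool" where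
  "reach F u v = ((\<lambda>x y. {x, y} \<in> F)\<^sup>*\<^sup>* u v)"

definition is_tree :: "'a set \<Rightarrow> 'a set set \<Rightarrow> bool" where
  "is_tree VT ET \<longleftrightarrow> VT \<noteq> {} \<and> finite VT \<and>
     (\<forall>e\<in>ET. \<exists>x y. x \<noteq> y \<and> x \<in> VT \<and> y \<in> VT \<and> e = {x, y}) \<and>
     (\<forall>u\<in>VT. \<forall>v\<in>VT. reach ET u v) \<and>
     (\<forall>e\<in>ET. \<forall>x y. e = {x, y} \<longrightarrow> \<not> reach (ET - {e}) x y)"

definition is_S_tree :: "'a set \<Rightarrow> 'a set set \<Rightarrow> 'a set \<Rightarrow> 'a set \<Rightarrow> 'a set set \<Rightarrow> bool" where
  "is_S_tree V E S VT ET \<longleftrightarrow> VT \<subseteq> V \<and> ET \<subseteq> E \<and> S \<subseteq> VT \<and> is_tree VT ET"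

definition rainbow :: "('a set \<Rightarrow> nat) \<Rightarrow> 'a set set \<Rightarrow> bool" where
  "rainbow c ET \<longleftrightarrow> inj_on c ET"

definition three_rainbow_coloring :: "'a set \<Rightarrow> 'a set set \<Rightarrow> ('a set \<Rightarrow> nat) \<Rightarrow> bool" where
  "three_rainbow_coloring V E c \<longleftrightarrow>
     (\<forall>S. S \<subseteq> V \<and> card S = 3 \<longrightarrow> (\<exists>VT ET. is_S_tree V E S VT ET \<and> rainbow c ET))"

definition rx3 :: "'a set \<Rightarrow> 'a set set \<Rightarrow> nat" where
  "rx3 V E = (LEAST k. \<exists>c. c ` E \<subseteq> {..<k} \<and> three_rainbow_coloring V E c)"

definition K2t_V :: "nat \<Rightarrow> (nat + nat) set" where
  "K2t_V t = {Inl 0, Inl 1} \<union> Inr ` {..<t}"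

definition K2t_E :: "nat \<Rightarrow> (nat + nat) set set" where
  "K2t_E t = {{Inl i, Inr j} | i j. i < 2 \<and> j < t}"

end

theory Submission
  imports Defs
begin

(*
  An upper bound rx3 \<le> 3 for t \<le> 4 comes from an explicit colouring: colour the edge between
  centre i and leaf j by entry (i, j) of [[0,1,2,0],[1,0,0,2]]. Every triple of leaves then has
  a centre at which it sees three colours, and the triples containing a centre are joined by
  paths of length two or three. At least three colours are needed since three leaves need three
  distinct pendant edges.

  For t \<ge> 5 suppose three colours suffice. A rainbow tree then has at most three edges, so the
  tree spanning leaves a, b, d consists of one pendant edge at each of them; being connected it is
  a star, and hence each triple of leaves sees three colours at a common centre. On five leaves
  this is impossible: two leaves p, q get the same colour at centre 0, so every further leaf r
  must be rainbow with p, q at centre 1. So the three remaining leaves all get the third colour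
  at centre 1, and any two of them together with p must be rainbow at centre 0: four distinct
  colours at centre 0.
*)

lemma reach_refl [simp]: "reach F u u"
  unfolding reach_def by simp

lemma reach_edge: "{u, v} \<in> F \<Longrightarrow> reach F u v"
  unfolding reach_def by (rule r_into_rtranclp)

lemma reach_trans: "reach F u v \<Longrightarrow> reach F v w \<Longrightarrow> reach F u w"
  unfolding reach_def by (rule rtranclp_trans)

lemma reach_sym: "reach F u v \<Longrightarrow> reach F v u"
proof -
  have "symp (\<lambda>x y. {x, y} \<in> F)" by (auto intro: sympI simp: insert_commute)
  then show "reach F u v \<Longrightarrow> reach F v u"
    unfolding reach_def by (rule sympD[OF symp_rtranclp])
qed

lemma reach_mono: "F \<subseteq> G \<Longrightarrow> reach F u v \<Longrightarrow> reach G u v"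
  unfolding reach_def by (erule rtranclp_mono[THEN predicate2D, rotated]) auto

lemma reach_closed:
  assumes "\<And>a b. {a, b} \<in> F \<Longrightarrow> a \<in> C \<Longrightarrow> b \<in> C" "reach F u v" "u \<in> C"
  shows "v \<in> C"
  using assms(2,3) unfolding reach_def
  by (induction rule: rtranclp_induct) (use assms(1) in blast)+

lemma reach_in_Union:
  assumes "reach F u v" "u \<noteq> v"
  shows "v \<in> \<Union>F"
proof -
  have "v \<in> insert u (\<Union>F)"
    by (rule reach_closed[OF _ assms(1)]) auto
  then show ?thesis using assms(2) by simp
qed

lemma reach_insert_pendant:
  assumes "y \<notin> \<Union>F" "reach (insert {x, y} F) u v" "u \<noteq> y" "v \<noteq> y"
  shows "reach F u v"
proof -
  \<comment> \<open>a walk can only pass through the pendant vertex y by going x, y, x\<close>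
  define C where "C = {w. reach F u w \<or> (w = y \<and> reach F u x)}"
  have unreached: "\<not> reach F u y" using reach_in_Union assms(1,3) by metis
  have "v \<in> C"
  proof (rule reach_closed[OF _ assms(2)])
    show "u \<in> C" by (simp add: C_def)
    fix a b assume ab: "{a, b} \<in> insert {x, y} F" "a \<in> C"
    show "b \<in> C"
    proof (cases "{a, b} = {x, y}")
      case True
      then consider "a = x" "b = y" | "a = y" "b = x" by (auto simp: doubleton_eq_iff)
      then show ?thesis
      proof cases
        case 1 then show ?thesis using ab(2) by (auto simp: C_def)
      next
        case 2 then show ?thesis using ab(2) unreached by (auto simp: C_def)
      qed
    next
      case False
      then have "{a, b} \<in> F" using ab(1) by simp
      moreover from this have "a \<noteq> y" using assms(1) by blast
      ultimately have "reach F u a" using ab(2) by (simp add: C_def)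
      then have "reach F u b" using reach_edge[OF \<open>{a, b} \<in> F\<close>] by (rule reach_trans)
      then show ?thesis by (simp add: C_def)
    qed
  qed
  then show ?thesis using assms(4) by (simp add: C_def)
qed

definition edges_acyclic :: "'a set set \<Rightarrow> bool" where
  "edges_acyclic F \<longleftrightarrow> (\<forall>e\<in>F. \<forall>x y. e = {x, y} \<longrightarrow> \<not> reach (F - {e}) x y)"

lemma edges_acyclic_insert_pendant:
  assumes acyclic: "edges_acyclic F" and y: "y \<notin> \<Union>F" and "x \<noteq> y"
  shows "edges_acyclic (insert {x, y} F)"
  unfolding edges_acyclic_def
proof (intro ballI allI impI)
  fix e p q assume e: "e \<in> insert {x, y} F" "e = {p, q}"
  show "\<not> reach (insert {x, y} F - {e}) p q"
  proof (cases "e = {x, y}")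
    case True
    then have F: "insert {x, y} F - {e} = F" using y by blast
    have pq: "(p = x \<and> q = y) \<or> (p = y \<and> q = x)"
      using True e(2) by (auto simp: doubleton_eq_iff)
    have "\<not> reach F x y" using reach_in_Union[of F x y] y \<open>x \<noteq> y\<close> by blast
    then show ?thesis using pq reach_sym[of F y x] unfolding F by auto
  next
    case False
    then have "e \<in> F" and F: "insert {x, y} F - {e} = insert {x, y} (F - {e})" using e(1) by auto
    have y': "y \<notin> \<Union>(F - {e})" and "p \<noteq> y" "q \<noteq> y" using y \<open>e \<in> F\<close> e(2) by auto
    have "\<not> reach (F - {e}) p q" using acyclic \<open>e \<in> F\<close> e(2) by (simp add: edges_acyclic_def)
    then show ?thesis
      using reach_insert_pendant[OF y' _ \<open>p \<noteq> y\<close> \<open>q \<noteq> y\<close>] unfolding F by blast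
  qed
qed

lemma is_tree_singleton: "is_tree {v} {}"
  unfolding is_tree_def by simp

lemma is_tree_add_leaf:
  assumes tree: "is_tree VT ET" and x: "x \<in> VT" and y: "y \<notin> VT"
  shows "is_tree (insert y VT) (insert {x, y} ET)"
proof -
  have edges: "\<forall>e\<in>ET. \<exists>p q. p \<noteq> q \<and> p \<in> VT \<and> q \<in> VT \<and> e = {p, q}"
    and conn: "\<forall>u\<in>VT. \<forall>v\<in>VT. reach ET u v"
    and acyclic: "edges_acyclic ET"
    using tree unfolding is_tree_def edges_acyclic_def by simp_all
  have "x \<noteq> y" using x y by blast
  let ?ET = "insert {x, y} ET"
  have edges': "\<forall>e\<in>?ET. \<exists>p q. p \<noteq> q \<and> p \<in> insert y VT \<and> q \<in> insert y VT \<and> e = {p, q}"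
    using edges x \<open>x \<noteq> y\<close> by fastforce
  have to_x: "reach ?ET w x" if "w \<in> insert y VT" for w
  proof (cases "w = y")
    case True
    then show ?thesis by (simp add: reach_edge insert_commute)
  next
    case False
    then have "reach ET w x" using conn that x by simp
    then show ?thesis by (rule reach_mono[rotated]) blast
  qed
  have conn': "\<forall>u\<in>insert y VT. \<forall>v\<in>insert y VT. reach ?ET u v"
    using reach_trans[OF to_x reach_sym[OF to_x]] by blast
  have "y \<notin> \<Union>ET" using edges y by fastforce
  then have "edges_acyclic ?ET" using acyclic \<open>x \<noteq> y\<close> by (intro edges_acyclic_insert_pendant)
  moreover have "insert y VT \<noteq> {}" "finite (insert y VT)" using tree by (simp_all add: is_tree_def)
  ultimately show ?thesis
    unfolding is_tree_def edges_acyclic_def using edges' conn' by blast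
qed

lemma is_S_tree_reach:
  "is_S_tree V E S VT ET \<Longrightarrow> u \<in> S \<Longrightarrow> v \<in> S \<Longrightarrow> reach ET u v"
  unfolding is_S_tree_def is_tree_def by blast

lemma inj_on_doubleton: "f x \<noteq> f y \<Longrightarrow> inj_on f {x, y}"
  by (auto simp: inj_on_def)

lemma inj_on_triple: "distinct [f x, f y, f z] \<Longrightarrow> inj_on f {x, y, z}"
  by (auto simp: inj_on_def)

lemma rainbow_card_le:
  assumes "rainbow c ET" "c ` ET \<subseteq> {..<k}"
  shows "finite ET" "card ET \<le> k"
proof -
  show "finite ET"
    using assms finite_subset[OF assms(2)] by (auto simp: rainbow_def dest: finite_imageD)
  show "card ET \<le> k"
    using card_inj_on_le[OF _ assms(2)] assms(1) by (simp add: rainbow_def)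
qed

lemma three_rainbow_coloringE:
  assumes "three_rainbow_coloring V E c" "S \<subseteq> V" "card S = 3"
  obtains VT ET where "is_S_tree V E S VT ET" "rainbow c ET"
  using assms unfolding three_rainbow_coloring_def by blast

lemma three_rainbow_coloringI_inj:
  assumes "inj_on c E"
    and "\<And>S. S \<subseteq> V \<Longrightarrow> card S = 3 \<Longrightarrow> \<exists>VT ET. is_S_tree V E S VT ET"
  shows "three_rainbow_coloring V E c"
  unfolding three_rainbow_coloring_def rainbow_def
proof (intro allI impI, elim conjE)
  fix S assume "S \<subseteq> V" "card S = 3"
  then obtain VT ET where T: "is_S_tree V E S VT ET" using assms(2) by blast
  then have "inj_on c ET" using assms(1) by (auto simp: is_S_tree_def intro: inj_on_subset)
  with T show "\<exists>VT ET. is_S_tree V E S VT ET \<and> inj_on c ET" by blast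
qed

lemma rx3_eqI:
  assumes "c ` E \<subseteq> {..<k}" "three_rainbow_coloring V E c"
    and "\<And>c' k'. c' ` E \<subseteq> {..<k'} \<Longrightarrow> three_rainbow_coloring V E c' \<Longrightarrow> k \<le> k'"
  shows "rx3 V E = k"
  unfolding rx3_def
proof (rule Least_equality)
  show "\<exists>c. c ` E \<subseteq> {..<k} \<and> three_rainbow_coloring V E c" using assms(1,2) by blast
  fix k' assume "\<exists>c. c ` E \<subseteq> {..<k'} \<and> three_rainbow_coloring V E c"
  then show "k \<le> k'" using assms(3) by blast
qed

lemma rx3_geI:
  assumes "c ` E \<subseteq> {..<k}" "three_rainbow_coloring V E c"
    and "\<And>c' k'. c' ` E \<subseteq> {..<k'} \<Longrightarrow> three_rainbow_coloring V E c' \<Longrightarrow> m \<le> k'"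
  shows "m \<le> rx3 V E"
  unfolding rx3_def
proof (rule LeastI2_ex)
  show "\<exists>k. \<exists>c. c ` E \<subseteq> {..<k} \<and> three_rainbow_coloring V E c" using assms(1,2) by blast
  fix k' assume "\<exists>c. c ` E \<subseteq> {..<k'} \<and> three_rainbow_coloring V E c"
  then show "m \<le> k'" using assms(3) by blast
qed

lemma Inl_Inr_in_K2t_E [simp]: "{Inl i, Inr j} \<in> K2t_E t \<longleftrightarrow> i < 2 \<and> j < t"
  unfolding K2t_E_def by (auto simp: doubleton_eq_iff)

lemma Inr_Inl_in_K2t_E [simp]: "{Inr j, Inl i} \<in> K2t_E t \<longleftrightarrow> i < 2 \<and> j < t"
  by (simp add: insert_commute)

lemma K2t_E_cases:
  assumes "e \<in> K2t_E t"
  obtains i j where "i < 2" "j < t" "e = {Inl i, Inr j}"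
  using assms unfolding K2t_E_def by blast

lemma Inl_in_K2t_V [simp]: "Inl i \<in> K2t_V t \<longleftrightarrow> i < 2"
  unfolding K2t_V_def by auto

lemma Inr_in_K2t_V [simp]: "Inr j \<in> K2t_V t \<longleftrightarrow> j < t"
  unfolding K2t_V_def by auto

lemma K2t_star_S_tree:
  assumes "i < 2" "a < t" "b < t" "c < t" "distinct [a, b, c]"
  shows "is_S_tree (K2t_V t) (K2t_E t) {Inr a, Inr b, Inr c}
           {Inr c, Inr b, Inr a, Inl i} {{Inl i, Inr c}, {Inl i, Inr b}, {Inl i, Inr a}}"
  unfolding is_S_tree_def using assms
  by (intro conjI is_tree_add_leaf is_tree_singleton) auto

lemma K2t_centres_S_tree:
  assumes "a < t"
  shows "is_S_tree (K2t_V t) (K2t_E t) {Inl 0, Inl 1, Inr a}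
           {Inl 1, Inr a, Inl 0} {{Inr a, Inl 1}, {Inl 0, Inr a}}"
  unfolding is_S_tree_def using assms
  by (intro conjI is_tree_add_leaf is_tree_singleton) auto

lemma K2t_short_path_S_tree:
  assumes "i < 2" "a < t" "b < t" "a \<noteq> b"
  shows "is_S_tree (K2t_V t) (K2t_E t) {Inl i, Inr a, Inr b}
           {Inr b, Inr a, Inl i} {{Inl i, Inr b}, {Inl i, Inr a}}"
  unfolding is_S_tree_def using assms
  by (intro conjI is_tree_add_leaf is_tree_singleton) auto

lemma K2t_long_path_S_tree:
  assumes "i < 2" "i' < 2" "i \<noteq> i'" "a < t" "b < t" "a \<noteq> b"
  shows "is_S_tree (K2t_V t) (K2t_E t) {Inl i, Inr a, Inr b}
           {Inl i, Inr b, Inl i', Inr a} {{Inr b, Inl i}, {Inl i', Inr b}, {Inr a, Inl i'}}"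
  unfolding is_S_tree_def using assms
  by (intro conjI is_tree_add_leaf is_tree_singleton) auto

lemma K2t_triple_cases:
  assumes "S \<subseteq> K2t_V t" "card S = 3"
  obtains (leaves) a b c where "a < t" "b < t" "c < t" "distinct [a, b, c]" "S = {Inr a, Inr b, Inr c}"
    | (centres) a where "a < t" "S = {Inl 0, Inl 1, Inr a}"
    | (mixed) i a b where "i < 2" "a < t" "b < t" "a \<noteq> b" "S = {Inl i, Inr a, Inr b}"
proof -
  define L where "L = {i. Inl i \<in> S}"
  define R where "R = {j. Inr j \<in> S}"
  have S: "S = Inl ` L \<union> Inr ` R"
  proof (intro equalityI subsetI)
    fix x assume "x \<in> S"
    then show "x \<in> Inl ` L \<union> Inr ` R" unfolding L_def R_def by (cases x) auto
  qed (auto simp: L_def R_def)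
  have "finite S" using assms(2) by (intro card_ge_0_finite) simp
  then have fin: "finite L" "finite R" unfolding S by (auto dest: finite_imageD)
  have "card S = card (Inl ` L :: (nat + nat) set) + card (Inr ` R :: (nat + nat) set)"
    unfolding S by (rule card_Un_disjoint) (use fin in auto)
  then have card: "card L + card R = 3" using assms(2) by (simp add: card_image)
  have L: "L \<subseteq> {0, 1}" and R: "R \<subseteq> {..<t}"
    using assms(1) unfolding L_def R_def by (auto simp: less_2_cases_iff)
  have "card L \<le> 2" using card_mono[OF _ L] by simp
  then consider "card L = 0" "card R = 3" | "card L = 1" "card R = 2" | "card L = 2" "card R = 1"
    using card by linarith
  then show thesis
  proof cases
    case 1
    then have "L = {}" using fin by simp
    obtain a b c where abc: "R = {a, b, c}" "a \<noteq> b" "a \<noteq> c" "b \<noteq> c"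
      using 1(2) unfolding card_3_iff by blast
    show thesis by (rule leaves[of a b c]) (use R abc in \<open>auto simp: S \<open>L = {}\<close>\<close>)
  next
    case 2
    obtain i where "L = {i}" using 2(1) by (rule card_1_singletonE)
    obtain a b where ab: "R = {a, b}" "a \<noteq> b" using 2(2) unfolding card_2_iff by blast
    show thesis by (rule mixed[of i a b]) (use L R ab in \<open>auto simp: S \<open>L = {i}\<close>\<close>)
  next
    case 3
    then have "L = {0, 1}" using L by (simp add: card_subset_eq)
    obtain a where "R = {a}" using 3(2) by (rule card_1_singletonE)
    show thesis by (rule centres[of a]) (use R \<open>R = {a}\<close> in \<open>auto simp: S \<open>L = {0, 1}\<close>\<close>)
  qed
qed

lemma K2t_S_tree_exists:
  assumes "S \<subseteq> K2t_V t" "card S = 3"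
  shows "\<exists>VT ET. is_S_tree (K2t_V t) (K2t_E t) S VT ET"
  using assms
proof (cases rule: K2t_triple_cases)
  case (leaves a b c)
  then have "is_S_tree (K2t_V t) (K2t_E t) S
    {Inr c, Inr b, Inr a, Inl 0} {{Inl 0, Inr c}, {Inl 0, Inr b}, {Inl 0, Inr a}}"
    by (simp add: K2t_star_S_tree)
  then show ?thesis by blast
next
  case (centres a)
  then show ?thesis using K2t_centres_S_tree by blast
next
  case (mixed i a b)
  then show ?thesis using K2t_short_path_S_tree by blast
qed

lemma K2t_S_tree_leaf_edge:
  assumes "is_S_tree (K2t_V t) (K2t_E t) S VT ET" "Inr j \<in> S" "Inr j' \<in> S" "j \<noteq> j'"
  obtains i where "i < 2" "{Inl i, Inr j} \<in> ET"
proof -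
  have "reach ET (Inr j') (Inr j)" using is_S_tree_reach[OF assms(1,3,2)] .
  then have "Inr j \<in> \<Union>ET" using assms(4) reach_in_Union by fastforce
  then obtain e where "e \<in> ET" "Inr j \<in> e" by blast
  moreover have "e \<in> K2t_E t" using \<open>e \<in> ET\<close> assms(1) by (auto simp: is_S_tree_def)
  ultimately show thesis using that by (auto elim!: K2t_E_cases)
qed

lemma K2t_leaves_S_tree_edges:
  assumes T: "is_S_tree (K2t_V t) (K2t_E t) {Inr a, Inr b, Inr d} VT ET" and "distinct [a, b, d]"
  obtains ia ib id where "{{Inl ia, Inr a}, {Inl ib, Inr b}, {Inl id, Inr d}} \<subseteq> ET"
    "card {{Inl ia, Inr a}, {Inl ib, Inr b}, {Inl id, Inr d}} = 3"
proof -
  obtain ia ib id where "{Inl ia, Inr a} \<in> ET" "{Inl ib, Inr b} \<in> ET" "{Inl id, Inr d} \<in> ET"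
    using K2t_S_tree_leaf_edge[OF T, of a b] K2t_S_tree_leaf_edge[OF T, of b a]
      K2t_S_tree_leaf_edge[OF T, of d a] assms(2) by (metis distinct_length_2_or_more insertCI)
  moreover have "card {{Inl ia, Inr a}, {Inl ib, Inr b}, {Inl id, Inr d}} = 3"
    using assms(2) by (simp add: doubleton_eq_iff)
  ultimately show thesis using that by simp
qed

lemma K2t_reach_same_centre:
  assumes "ET \<subseteq> {{Inl i, Inr a}, {Inl j, Inr b}, {Inl k, Inr d}}" "distinct [a, b, d]"
    and "reach ET (Inr a) (Inr b)"
  shows "i = j"
proof (rule ccontr)
  assume "i \<noteq> j"
  \<comment> \<open>no edge of ET leaves the component of Inr a\<close>
  define C where "C = {Inl i, Inr a} \<union> (if k = i then {Inr d} else {})"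
  have "Inr b \<in> C"
  proof (rule reach_closed[OF _ assms(3)])
    fix p q assume "{p, q} \<in> ET" "p \<in> C"
    then show "q \<in> C"
      using assms(1,2) \<open>i \<noteq> j\<close> unfolding C_def
      by (auto simp: doubleton_eq_iff split: if_splits)
  qed (simp add: C_def)
  then show False using assms(2) unfolding C_def by (auto split: if_splits)
qed

(* On sets other than an edge {Inl i, Inr j} the THE-terms are unspecified. *)
definition edge_colouring :: "(nat \<Rightarrow> nat \<Rightarrow> nat) \<Rightarrow> (nat + nat) set \<Rightarrow> nat" where
  "edge_colouring f e = f (THE i. Inl i \<in> e) (THE j. Inr j \<in> e)"

lemma edge_colouring_Inl_Inr [simp]: "edge_colouring f {Inl i, Inr j} = f i j"
  unfolding edge_colouring_def by (simp add: the_equality)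

lemma edge_colouring_Inr_Inl [simp]: "edge_colouring f {Inr j, Inl i} = f i j"
  by (simp add: insert_commute)

lemma K2t_injective_colouring_range:
  "edge_colouring (\<lambda>i j. 2 * j + i) ` K2t_E t \<subseteq> {..<2 * t}"
  by (auto elim!: K2t_E_cases)

lemma K2t_injective_colouring_three_rainbow:
  "three_rainbow_coloring (K2t_V t) (K2t_E t) (edge_colouring (\<lambda>i j. 2 * j + i))"
proof (rule three_rainbow_coloringI_inj)
  show "inj_on (edge_colouring (\<lambda>i j. 2 * j + i)) (K2t_E t)"
    by (auto intro!: inj_onI elim!: K2t_E_cases simp: less_2_cases_iff) presburger+
qed (rule K2t_S_tree_exists)

definition K24_colour :: "nat \<Rightarrow> nat \<Rightarrow> nat" where
  "K24_colour i j = [[0, 1, 2, 0], [1, 0, 0, 2]] ! i ! j"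

lemma less_4_cases: "j < (4::nat) \<longleftrightarrow> j = 0 \<or> j = 1 \<or> j = 2 \<or> j = 3"
  by auto

lemma K24_colour_less_3: "i < 2 \<Longrightarrow> j < 4 \<Longrightarrow> K24_colour i j < 3"
  by (auto simp: K24_colour_def less_2_cases_iff less_4_cases)

lemma K24_colour_column: "j < 4 \<Longrightarrow> K24_colour 0 j \<noteq> K24_colour 1 j"
  by (auto simp: K24_colour_def less_2_cases_iff less_4_cases)

lemma K24_colour_rainbow_row:
  assumes "a < 4" "b < 4" "c < 4" "distinct [a, b, c]"
  shows "\<exists>i<2. distinct [K24_colour i a, K24_colour i b, K24_colour i c]"
proof -
  have "distinct [K24_colour 0 a, K24_colour 0 b, K24_colour 0 c] \<or>
      distinct [K24_colour 1 a, K24_colour 1 b, K24_colour 1 c]"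
    using assms unfolding less_4_cases by (elim disjE) (simp_all add: K24_colour_def)
  then show ?thesis by (auto simp: less_2_cases_iff)
qed

lemma K24_colour_repeat:
  "i < 2 \<Longrightarrow> a < 4 \<Longrightarrow> b < 4 \<Longrightarrow> a \<noteq> b \<Longrightarrow> K24_colour i a = K24_colour i b \<Longrightarrow>
    distinct [K24_colour (1 - i) a, K24_colour (1 - i) b, K24_colour i b]"
  by (auto simp: K24_colour_def less_2_cases_iff less_4_cases)

lemma K24_colouring_range: "t \<le> 4 \<Longrightarrow> edge_colouring K24_colour ` K2t_E t \<subseteq> {..<3}"
  by (auto elim!: K2t_E_cases simp: K24_colour_less_3)

lemma K24_colouring_three_rainbow:
  assumes "t \<le> 4"
  shows "three_rainbow_coloring (K2t_V t) (K2t_E t) (edge_colouring K24_colour)"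
  unfolding three_rainbow_coloring_def rainbow_def
proof (intro allI impI, elim conjE)
  fix S assume "S \<subseteq> K2t_V t" "card S = 3"
  then show "\<exists>VT ET. is_S_tree (K2t_V t) (K2t_E t) S VT ET \<and> inj_on (edge_colouring K24_colour) ET"
  proof (cases rule: K2t_triple_cases)
    case (leaves a b c)
    have "a < 4" "b < 4" "c < 4" using leaves assms by simp_all
    then obtain i where i: "i < 2" "distinct [K24_colour i a, K24_colour i b, K24_colour i c]"
      using K24_colour_rainbow_row leaves(4) by blast
    show ?thesis unfolding \<open>S = _\<close>
      by (rule exI, rule exI, rule conjI[OF K2t_star_S_tree inj_on_triple]) (use leaves i in auto)
  next
    case (centres a)
    show ?thesis unfolding \<open>S = _\<close>
      by (rule exI, rule exI, rule conjI[OF K2t_centres_S_tree inj_on_doubleton])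
        (use centres K24_colour_column[of a] assms in auto)
  next
    case (mixed i a b)
    show ?thesis
    proof (cases "K24_colour i a = K24_colour i b")
      case False
      show ?thesis unfolding \<open>S = _\<close>
        by (rule exI, rule exI, rule conjI[OF K2t_short_path_S_tree inj_on_doubleton])
          (use mixed False in auto)
    next
      case True
      then have "distinct [K24_colour (1 - i) a, K24_colour (1 - i) b, K24_colour i b]"
        using K24_colour_repeat[of i a b] mixed assms by simp
      show ?thesis unfolding \<open>S = _\<close>
        by (rule exI, rule exI, rule conjI[OF K2t_long_path_S_tree[where i' = "1 - i"] inj_on_triple])
          (use mixed \<open>distinct _\<close> in auto)
    qed
  qed
qed

lemma K2t_colours_ge_3:
  assumes "3 \<le> t" "c ` K2t_E t \<subseteq> {..<k}" "three_rainbow_coloring (K2t_V t) (K2t_E t) c"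
  shows "3 \<le> k"
proof -
  obtain VT ET where T: "is_S_tree (K2t_V t) (K2t_E t) {Inr 0, Inr 1, Inr 2} VT ET" "rainbow c ET"
    by (rule three_rainbow_coloringE[OF assms(3), of "{Inr 0, Inr 1, Inr 2}"]) (use assms(1) in auto)
  obtain X where X: "X \<subseteq> ET" "card X = 3"
    by (rule K2t_leaves_S_tree_edges[OF T(1)]) (simp, rule that)
  have colours: "c ` ET \<subseteq> {..<k}" using T(1) assms(2) by (auto simp: is_S_tree_def)
  have "3 = card X" using X(2) ..
  also have "\<dots> \<le> card ET" using rainbow_card_le(1)[OF T(2) colours] X(1) by (rule card_mono)
  also have "\<dots> \<le> k" using rainbow_card_le(2)[OF T(2) colours] .
  finally show ?thesis .
qed

lemma less_3_cases_distinct: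
  fixes w x y z :: nat
  assumes "x < 3" "y < 3" "z < 3" "distinct [x, y, z]" "w < 3"
  shows "w = x \<or> w = y \<or> w = z"
  using assms by auto

lemma two_colourings_of_five_not_rainbow:
  fixes X :: "nat \<Rightarrow> nat \<Rightarrow> nat"
  assumes colours: "\<And>i j. i < 2 \<Longrightarrow> j < 5 \<Longrightarrow> X i j < 3"
    and rainbow: "\<And>a b d. a < 5 \<Longrightarrow> b < 5 \<Longrightarrow> d < 5 \<Longrightarrow> distinct [a, b, d] \<Longrightarrow>
      \<exists>i<2. distinct [X i a, X i b, X i d]"
  shows False
proof -
  have row: "distinct [X 0 a, X 0 b, X 0 d] \<or> distinct [X 1 a, X 1 b, X 1 d]"
    if "a < 5" "b < 5" "d < 5" "distinct [a, b, d]" for a b d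
    using rainbow[OF that] by (auto simp: less_2_cases_iff)
  have "\<not> inj_on (X 0) {..<5}"
  proof
    assume "inj_on (X 0) {..<5}"
    then have "card (X 0 ` {..<5}) = 5" by (simp add: card_image)
    moreover have "X 0 ` {..<5} \<subseteq> {..<3}" using colours by auto
    ultimately show False using card_mono[of "{..<3}" "X 0 ` {..<5}"] by simp
  qed
  then obtain p q where pq: "p < 5" "q < 5" "p \<noteq> q" "X 0 p = X 0 q"
    unfolding inj_on_def by auto
  have "card ({..<5} - {p, q}) = 3" using pq by simp
  then obtain r1 r2 r3 where R: "{..<5} - {p, q} = {r1, r2, r3}" "distinct [r1, r2, r3]"
    unfolding card_3_iff by auto
  have "{r1, r2, r3} \<subseteq> {..<5} - {p, q}" using R(1) by simp
  then have r: "r1 < 5" "r2 < 5" "r3 < 5" "distinct [p, q, r1, r2, r3]" using R(2) pq(3) by auto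
  have lt0: "X 0 p < 3" "X 0 r1 < 3" "X 0 r2 < 3" "X 0 r3 < 3"
    and lt1: "X 1 p < 3" "X 1 q < 3" "X 1 r1 < 3" "X 1 r2 < 3" "X 1 r3 < 3"
    using colours pq r by simp_all
  have centre_1: "distinct [X 1 p, X 1 q, X 1 r]" if "r < 5" "r \<noteq> p" "r \<noteq> q" for r
    using row[of p q r] pq that by auto
  have c1: "distinct [X 1 p, X 1 q, X 1 r1]" and "X 1 r2 \<notin> {X 1 p, X 1 q}" "X 1 r3 \<notin> {X 1 p, X 1 q}"
    using centre_1[of r1] centre_1[of r2] centre_1[of r3] r by auto
  then have "X 1 r1 = X 1 r2" "X 1 r1 = X 1 r3"
    using less_3_cases_distinct[OF lt1(1,2,3) c1 lt1(4)]
      less_3_cases_distinct[OF lt1(1,2,3) c1 lt1(5)] by auto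
  then have "distinct [X 0 p, X 0 r1, X 0 r2]" "distinct [X 0 p, X 0 r1, X 0 r3]"
    "distinct [X 0 p, X 0 r2, X 0 r3]"
    using row[of p r1 r2] row[of p r1 r3] row[of p r2 r3] r pq by auto
  then show False
    using less_3_cases_distinct[OF lt0(2,3,4) _ lt0(1)] by auto
qed

lemma K2t_3_colouring_rainbow_centre:
  assumes colours: "c ` K2t_E t \<subseteq> {..<3}" and "three_rainbow_coloring (K2t_V t) (K2t_E t) c"
    and "a < t" "b < t" "d < t" "distinct [a, b, d]"
  shows "\<exists>i<2. distinct [c {Inl i, Inr a}, c {Inl i, Inr b}, c {Inl i, Inr d}]"
proof -
  obtain VT ET where T: "is_S_tree (K2t_V t) (K2t_E t) {Inr a, Inr b, Inr d} VT ET" "rainbow c ET"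
    by (rule three_rainbow_coloringE[OF assms(2), of "{Inr a, Inr b, Inr d}"]) (use assms(3-6) in auto)
  obtain ia ib id where X: "{{Inl ia, Inr a}, {Inl ib, Inr b}, {Inl id, Inr d}} \<subseteq> ET"
    "card {{Inl ia, Inr a}, {Inl ib, Inr b}, {Inl id, Inr d}} = 3"
    using K2t_leaves_S_tree_edges[OF T(1) assms(6)] .
  have "ET \<subseteq> K2t_E t" using T(1) by (simp add: is_S_tree_def)
  then have "c ` ET \<subseteq> {..<3}" using colours by blast
  then have "finite ET" "card ET \<le> 3" using rainbow_card_le[OF T(2)] by auto
  then have ET: "ET = {{Inl ia, Inr a}, {Inl ib, Inr b}, {Inl id, Inr d}}"
    using X card_mono[OF \<open>finite ET\<close> X(1)] card_subset_eq[OF \<open>finite ET\<close> X(1)] by simp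
  have "ia = ib"
    by (rule K2t_reach_same_centre[of ET ia a ib b id d])
      (use assms(6) is_S_tree_reach[OF T(1)] in \<open>simp_all add: ET\<close>)
  moreover have "ia = id"
    by (rule K2t_reach_same_centre[of ET ia a id d ib b])
      (use assms(6) is_S_tree_reach[OF T(1)] in \<open>auto simp: ET\<close>)
  moreover have "ia < 2" using \<open>ET \<subseteq> K2t_E t\<close> unfolding ET by simp
  moreover have "distinct [{Inl ia, Inr a}, {Inl ib, Inr b}, {Inl id, Inr d}]"
    using X(2) by (intro card_distinct) simp
  then have "distinct (map c [{Inl ia, Inr a}, {Inl ib, Inr b}, {Inl id, Inr d}])"
    using T(2) unfolding ET rainbow_def by (simp only: distinct_map set_simps)
  ultimately show ?thesis by auto
qed

lemma K2t_colours_ge_4: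
  assumes "5 \<le> t" "c ` K2t_E t \<subseteq> {..<k}" "three_rainbow_coloring (K2t_V t) (K2t_E t) c"
  shows "4 \<le> k"
proof (rule ccontr)
  assume "\<not> 4 \<le> k"
  then have colours: "c ` K2t_E t \<subseteq> {..<3}" using assms(2) by auto
  show False
  proof (rule two_colourings_of_five_not_rainbow)
    fix i j :: nat assume "i < 2" "j < 5"
    then have "{Inl i, Inr j} \<in> K2t_E t" using assms(1) by simp
    then show "c {Inl i, Inr j} < 3" using colours by blast
  next
    fix a b d :: nat assume "a < 5" "b < 5" "d < 5" "distinct [a, b, d]"
    then show "\<exists>i<2. distinct [c {Inl i, Inr a}, c {Inl i, Inr b}, c {Inl i, Inr d}]"
      using K2t_3_colouring_rainbow_centre[OF colours assms(3)] assms(1) by simp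
  qed
qed

theorem lemma3:
  shows "rx3 (K2t_V 3) (K2t_E 3) = 3 \<and> rx3 (K2t_V 4) (K2t_E 4) = 3 \<and>
         (\<forall>t\<ge>5. rx3 (K2t_V t) (K2t_E t) \<ge> 4)"
proof (intro conjI allI impI)
  have "rx3 (K2t_V t) (K2t_E t) = 3" if "3 \<le> t" "t \<le> 4" for t
    using K24_colouring_range[OF that(2)] K24_colouring_three_rainbow[OF that(2)]
      K2t_colours_ge_3[OF that(1)] by (rule rx3_eqI)
  then show "rx3 (K2t_V 3) (K2t_E 3) = 3" "rx3 (K2t_V 4) (K2t_E 4) = 3" by simp_all
  fix t :: nat assume "5 \<le> t"
  then show "4 \<le> rx3 (K2t_V t) (K2t_E t)"
    by (intro rx3_geI[OF K2t_injective_colouring_range K2t_injective_colouring_three_rainbow]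
        K2t_colours_ge_4)
qed

end
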